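(* Let $G$ and $H$ be fully supported graphs. Then $G$ and $H$ are weakly disjoint if and only if their transition matrices share no eigenvalue other than $1$ and the eigenvalue $1$ has overlapping multiplicity one.
   Context: A weight function on a finite set $U$ is $\alpha:U\times U\to\mathbb{R}$ with $\alpha\ge0$, $\alpha(u,u')=\alpha(u',u)$, $\sum\alpha=1$; degree $p(u)=\sum_{u'}\alpha(u,u')$. A graph is $G=(U,\alpha)$; it is fully supported if $p(u)>0$ for all $u$. The transition matrix of a fully supported $G$ with $U=\{u_1,\dots,u_m\}$ is the matrix with entries $\alpha(u_i,u_j)/p(u_i)$. Two matrices share an eigenvalue $\lambda$ with overlapping multiplicity $k$ if $\lambda$ is an eigenvalue of both and $k$ is the minimum of its algebraic multiplicities in the two matrices. For graphs $G=(U,\alpha)$, $H=(V,\beta)$ with degrees $p,q$, a weight joining is a weight function $\gamma$ on $U\times V$ with degree $r(u,v)=\sum_{(u',v')}\gamma((u,v),(u',v'))$ such that $\sum_v r(u,v)=p(u)$, $\sum_u r(u,v)=q(v)$, $p(u)\sum_{\tilde v}\gamma((u,v),(u',\tilde v))=\alpha(u,u')r(u,v)$ and $q(v)\sum_{\tilde u}\gamma((u,v),(\tilde u,v'))=\beta(v,v')r(u,v)$ for all $u,u',v,v'$. $G$ and $H$ are weakly disjoint if every weight joining has degree function $r(u,v)=p(u)q(v)$. *)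

theory Defs
  imports "Jordan_Normal_Form.Char_Poly"
begin

text \<open>A weight function on a finite set U, represented as a real function on the ambient
  type that vanishes outside U x U.\<close>
definition weight_fun :: "'a set \<Rightarrow> ('a \<Rightarrow> 'a \<Rightarrow> real) \<Rightarrow> bool" where
  "weight_fun U \<alpha> \<longleftrightarrow> finite U
     \<and> (\<forall>u u'. (u \<notin> U \<or> u' \<notin> U) \<longrightarrow> \<alpha> u u' = 0)
     \<and> (\<forall>u u'. \<alpha> u u' \<ge> 0)
     \<and> (\<forall>u u'. \<alpha> u u' = \<alpha> u' u)
     \<and> (\<Sum>u\<in>U. \<Sum>u'\<in>U. \<alpha> u u') = 1"

definition degree_fun :: "'a set \<Rightarrow> ('a \<Rightarrow> 'a \<Rightarrow> real) \<Rightarrow> 'a \<Rightarrow> real" where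
  "degree_fun U \<alpha> u = (\<Sum>u'\<in>U. \<alpha> u u')"

definition fully_supported :: "'a set \<Rightarrow> ('a \<Rightarrow> 'a \<Rightarrow> real) \<Rightarrow> bool" where
  "fully_supported U \<alpha> \<longleftrightarrow> weight_fun U \<alpha> \<and> (\<forall>u\<in>U. degree_fun U \<alpha> u > 0)"

definition enum_set :: "'a set \<Rightarrow> 'a list" where
  "enum_set U = (SOME xs. distinct xs \<and> set xs = U)"

definition transition_mat :: "'a set \<Rightarrow> ('a \<Rightarrow> 'a \<Rightarrow> real) \<Rightarrow> complex mat" where
  "transition_mat U \<alpha> = (let xs = enum_set U in
     mat (length xs) (length xs)
       (\<lambda>(i, j). complex_of_real (\<alpha> (xs ! i) (xs ! j) / degree_fun U \<alpha> (xs ! i))))"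

definition alg_mult :: "complex mat \<Rightarrow> complex \<Rightarrow> nat" where
  "alg_mult A c = order c (char_poly A)"

definition share_eigenvalue_overlap :: "complex mat \<Rightarrow> complex mat \<Rightarrow> complex \<Rightarrow> nat \<Rightarrow> bool" where
  "share_eigenvalue_overlap A B c k \<longleftrightarrow> eigenvalue A c \<and> eigenvalue B c
     \<and> k = min (alg_mult A c) (alg_mult B c)"

definition weight_joining :: "'a set \<Rightarrow> ('a \<Rightarrow> 'a \<Rightarrow> real) \<Rightarrow> 'b set \<Rightarrow> ('b \<Rightarrow> 'b \<Rightarrow> real)
    \<Rightarrow> ('a \<times> 'b \<Rightarrow> 'a \<times> 'b \<Rightarrow> real) \<Rightarrow> bool" where
  "weight_joining U \<alpha> V \<beta> \<gamma> \<longleftrightarrow> weight_fun (U \<times> V) \<gamma>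
     \<and> (\<forall>u\<in>U. (\<Sum>v\<in>V. degree_fun (U \<times> V) \<gamma> (u, v)) = degree_fun U \<alpha> u)
     \<and> (\<forall>v\<in>V. (\<Sum>u\<in>U. degree_fun (U \<times> V) \<gamma> (u, v)) = degree_fun V \<beta> v)
     \<and> (\<forall>u\<in>U. \<forall>u'\<in>U. \<forall>v\<in>V.
          degree_fun U \<alpha> u * (\<Sum>v'\<in>V. \<gamma> (u, v) (u', v'))
            = \<alpha> u u' * degree_fun (U \<times> V) \<gamma> (u, v))
     \<and> (\<forall>u\<in>U. \<forall>v\<in>V. \<forall>v'\<in>V.
          degree_fun V \<beta> v * (\<Sum>u'\<in>U. \<gamma> (u, v) (u', v'))
            = \<beta> v v' * degree_fun (U \<times> V) \<gamma> (u, v))"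

definition weakly_disjoint :: "'a set \<Rightarrow> ('a \<Rightarrow> 'a \<Rightarrow> real) \<Rightarrow> 'b set \<Rightarrow> ('b \<Rightarrow> 'b \<Rightarrow> real) \<Rightarrow> bool" where
  "weakly_disjoint U \<alpha> V \<beta> \<longleftrightarrow> (\<forall>\<gamma>. weight_joining U \<alpha> V \<beta> \<gamma> \<longrightarrow>
     (\<forall>u\<in>U. \<forall>v\<in>V. degree_fun (U \<times> V) \<gamma> (u, v) = degree_fun U \<alpha> u * degree_fun V \<beta> v))"

end

theory Submission
  imports
    Defs
    Jordan_Normal_Form.Jordan_Normal_Form_Uniqueness
    Jordan_Normal_Form.Jordan_Normal_Form_Existence
begin

text \<open>
  The transition matrix \<open>P\<close> of a fully supported graph satisfies detailed balance
  \<open>p(u) P(u,u') = \<alpha>(u,u')\<close>, so it is self-adjoint for the inner product weighted by \<open>p\<close>: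
  it is diagonalizable, its eigenvalues are real, and its eigenvectors may be taken real.

  If \<open>\<gamma>\<close> is a weight joining of \<open>G\<close> and \<open>H\<close> with degree \<open>r\<close>, the density
  \<open>z(u,v) = r(u,v) / (p(u) q(v))\<close> intertwines the transition matrices: \<open>P z = z Q\<^sup>T\<close>.
  Diagonalizing \<open>P\<close> shows that if \<open>P\<close> and \<open>Q\<close> share no eigenvalue but 1, then
  \<open>P z = z = z Q\<^sup>T\<close>. If 1 is a simple eigenvalue of \<open>P\<close> (or of \<open>Q\<close>), \<open>z\<close> is therefore
  constant in the first (or second) variable, and the marginal conditions force \<open>z = 1\<close>,
  i.e. \<open>r(u,v) = p(u) q(v)\<close>.

  Conversely, let \<open>f\<close> and \<open>g\<close> be real eigenfunctions of \<open>P\<close> and \<open>Q\<close> for a common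
  eigenvalue \<open>\<lambda>\<close> with \<open>\<Sum> p f = \<Sum> q g = 0\<close>: for \<open>\<lambda> \<noteq> 1\<close> this orthogonality is
  automatic, and for \<open>\<lambda> = 1\<close> such non-constant harmonic functions exist when 1 has
  multiplicity at least 2 for both. For small \<open>\<epsilon> > 0\<close> the perturbed product
  \<open>\<alpha>(u,u') \<beta>(v,v') (1 + \<epsilon> h)\<close>, where
  \<open>h = f(u) g(v) + f(u') g(v') - t (f(u) g(v') + f(u') g(v))\<close>, is a weight joining whose
  degree \<open>p(u) q(v) (1 + \<epsilon> (1 + \<lambda>\<^sup>2 - 2 t \<lambda>) f(u) g(v))\<close> is not a product.
\<close>

section \<open>Diagonalized matrices\<close>

lemma eigenvalue_iff_alg_mult_pos:
  assumes "A \<in> carrier_mat n n"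
  shows "eigenvalue A c \<longleftrightarrow> 0 < alg_mult A c"
proof -
  have "char_poly A \<noteq> 0" using degree_monic_char_poly[OF assms] by auto
  then show ?thesis by (simp add: alg_mult_def eigenvalue_root_char_poly[OF assms] order_gt_0_iff)
qed

lemma mult_vec_char_matrix:
  assumes "A \<in> carrier_mat n n" and "v \<in> carrier_vec n"
  shows "A *\<^sub>v v = e \<cdot>\<^sub>v v + char_matrix A e *\<^sub>v v"
  using assms by (intro eq_vecI) (auto simp: char_matrix_def add_scalar_prod_distrib[of _ n])

lemma sum_list_min_2_eq_min_1:
  assumes "sum_list (map (min (2::nat)) xs) = sum_list (map (min 1) xs)" and "x \<in> set xs"
  shows "x \<le> 1"
  using assms
proof (induction xs)
  case (Cons a xs)
  have "sum_list (map (min 1) xs) \<le> sum_list (map (min (2::nat)) xs)"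
    by (rule sum_list_mono) simp
  moreover have "min 1 a \<le> min (2::nat) a" by simp
  ultimately have "min (2::nat) a = min 1 a"
    and "sum_list (map (min (2::nat)) xs) = sum_list (map (min 1) xs)"
    using Cons.prems(1) by auto
  with Cons show ?case by auto
qed simp

lemma jordan_matrix_blocks_of_size_1:
  assumes "\<forall>b\<in>set n_as. fst b = 1"
  shows "jordan_matrix n_as = mat_diag (length n_as) (\<lambda>i. snd (n_as ! i))"
  using assms
proof (induction n_as)
  case Nil
  show ?case by (auto simp: jordan_matrix_def mat_diag_def)
next
  case (Cons b n_as)
  obtain a where b: "b = (1, a)" using Cons.prems by (cases b) auto
  have "sum_list (map fst n_as) = length n_as"
    using Cons.prems by (induction n_as) auto
  then show ?case using Cons
    by (intro eq_matI)
      (auto simp: b jordan_matrix_Cons mat_diag_def jordan_block_def nth_Cons split: nat.splits)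
qed

lemma similar_mat_wit_mult_commute:
  assumes "A \<in> carrier_mat n n" and "similar_mat_wit A B S S'"
  shows "A * S = S * B" and "S' * A = B * S'"
proof -
  note wit = similar_mat_witD2[OF assms]
  have "A * S = S * B * (S' * S)"
    using wit by (simp add: assoc_mult_mat[of _ n n _ n _ n])
  then show "A * S = S * B" using wit by simp
  have "S' * A = (S' * S) * (B * S')"
    by (subst assoc_mult_mat[of S' n n S n "B * S'" n])
      (use wit in \<open>simp_all add: assoc_mult_mat[of _ n n _ n _ n]\<close>)
  then show "S' * A = B * S'" using wit by simp
qed

lemma mat_diag_mult_vec_index:
  "v \<in> carrier_vec n \<Longrightarrow> i < n \<Longrightarrow> (mat_diag n d *\<^sub>v v) $ i = d i * v $ i"
  by (simp add: mat_diag_def scalar_prod_def sum.remove[of _ i])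

lemma diagonalized_coordinate_eq_0:
  fixes A :: "'a :: field mat"
  assumes A: "A \<in> carrier_mat n n" and S': "S' \<in> carrier_mat n n"
    and SA: "S' * A = mat_diag n d * S'"
    and y: "y \<in> carrier_vec n" and Ay: "A *\<^sub>v y = c \<cdot>\<^sub>v y" and i: "i < n" and di: "d i \<noteq> c"
  shows "(S' *\<^sub>v y) $ i = 0"
proof -
  have "mat_diag n d *\<^sub>v (S' *\<^sub>v y) = (S' * A) *\<^sub>v y"
    using A S' y by (simp add: SA assoc_mult_mat_vec[of _ n n _ n])
  also have "\<dots> = c \<cdot>\<^sub>v (S' *\<^sub>v y)"
    using A S' y by (simp add: Ay assoc_mult_mat_vec[of _ n n _ n] mult_mat_vec[OF S' y])
  finally have "(mat_diag n d *\<^sub>v (S' *\<^sub>v y)) $ i = (c \<cdot>\<^sub>v (S' *\<^sub>v y)) $ i" by simp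
  then have "d i * (S' *\<^sub>v y) $ i = c * (S' *\<^sub>v y) $ i"
    using S' y i by (simp add: mat_diag_mult_vec_index)
  with di show ?thesis by simp
qed

lemma diagonalized_col_eigenvector:
  fixes A :: "'a :: field mat"
  assumes A: "A \<in> carrier_mat n n" and S: "S \<in> carrier_mat n n"
    and AS: "A * S = S * mat_diag n d" and i: "i < n"
  shows "A *\<^sub>v col S i = d i \<cdot>\<^sub>v col S i"
proof -
  have "A *\<^sub>v col S i = col (A * S) i" by (rule col_mult2[OF A S i, symmetric])
  also have "\<dots> = col (S * mat_diag n d) i" by (simp only: AS)
  also have "\<dots> = d i \<cdot>\<^sub>v col S i"
    using S i by (intro eq_vecI) (auto simp: mat_diag_mult_right[OF S] mult.commute)
  finally show ?thesis .
qed

lemma mult_vec_row_index: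
  fixes A :: "'a :: comm_semiring_0 mat"
  assumes "A \<in> carrier_mat m k" and "N \<in> carrier_mat k k" and "i < m" and "j < k"
  shows "(N *\<^sub>v row A i) $ j = (A * transpose_mat N) $$ (i, j)"
  using assms by (simp, subst comm_scalar_prod[of _ k]) auto

lemma diagonal_intertwiner_row_eq_0:
  assumes W: "W \<in> carrier_mat n k" and N: "N \<in> carrier_mat k k"
    and DW: "mat_diag n d * W = W * transpose_mat N"
    and i: "i < n" and not_eigenvalue: "\<not> eigenvalue N (d i)"
  shows "row W i = 0\<^sub>v k"
proof -
  have "N *\<^sub>v row W i = d i \<cdot>\<^sub>v row W i"
  proof (rule eq_vecI)
    fix l assume "l < dim_vec (d i \<cdot>\<^sub>v row W i)"
    then have l: "l < k" using W by simp
    have "(N *\<^sub>v row W i) $ l = (W * transpose_mat N) $$ (i, l)"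
      by (rule mult_vec_row_index[OF W N i l])
    also have "\<dots> = d i * W $$ (i, l)" using W i l by (simp flip: DW add: mat_diag_mult_left[OF W])
    finally show "(N *\<^sub>v row W i) $ l = (d i \<cdot>\<^sub>v row W i) $ l" using W i l by simp
  qed (use N W in simp)
  then show ?thesis
    using not_eigenvalue N W i row_carrier[of W i] unfolding eigenvalue_def eigenvector_def
    by (metis carrier_matD)
qed

lemma mult_unit_vec_eq_col:
  fixes A :: "'a :: semiring_1 mat"
  shows "A \<in> carrier_mat nr n \<Longrightarrow> i < n \<Longrightarrow> A *\<^sub>v unit_vec n i = col A i"
  by (intro eq_vecI) (auto simp: scalar_prod_def sum.remove[of _ i])

section \<open>Matrices in detailed balance with positive weights\<close>

definition Re_vec :: "complex vec \<Rightarrow> complex vec" where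
  "Re_vec x = map_vec (\<lambda>a. complex_of_real (Re a)) x"

definition Im_vec :: "complex vec \<Rightarrow> complex vec" where
  "Im_vec x = map_vec (\<lambda>a. complex_of_real (Im a)) x"

lemma Re_vec_Im_vec_eq_0:
  "x \<in> carrier_vec n \<Longrightarrow> Re_vec x = 0\<^sub>v n \<Longrightarrow> Im_vec x = 0\<^sub>v n \<Longrightarrow> x = 0\<^sub>v n"
  by (auto simp: Re_vec_def Im_vec_def vec_eq_iff complex_eq_iff)

lemma Re_vec_plus_Im_vec: "x = Re_vec x + \<i> \<cdot>\<^sub>v Im_vec x"
  by (rule eq_vecI) (simp_all add: Re_vec_def Im_vec_def complex_eq_iff)

locale reversible_mat =
  fixes n :: nat and m :: "nat \<Rightarrow> nat \<Rightarrow> real" and w :: "nat \<Rightarrow> real"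
  assumes weight_pos: "\<And>i. i < n \<Longrightarrow> 0 < w i"
    and detailed_balance: "\<And>i j. i < n \<Longrightarrow> j < n \<Longrightarrow> w i * m i j = w j * m j i"
begin

definition M :: "complex mat" where
  "M = mat n n (\<lambda>(i, j). complex_of_real (m i j))"

lemma M_carrier [simp]: "M \<in> carrier_mat n n"
  and M_dim [simp]: "dim_row M = n" "dim_col M = n"
  by (simp_all add: M_def)

lemma row_M_scalar_prod:
  "x \<in> carrier_vec n \<Longrightarrow> i < n \<Longrightarrow> row M i \<bullet> x = (\<Sum>j = 0..<n. complex_of_real (m i j) * x $ j)"
  by (simp add: M_def scalar_prod_def)

lemma M_mult_Re_vec: "x \<in> carrier_vec n \<Longrightarrow> M *\<^sub>v Re_vec x = Re_vec (M *\<^sub>v x)"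
  and M_mult_Im_vec: "x \<in> carrier_vec n \<Longrightarrow> M *\<^sub>v Im_vec x = Im_vec (M *\<^sub>v x)"
  by (auto intro!: eq_vecI sum.cong simp: row_M_scalar_prod Re_vec_def Im_vec_def Re_sum Im_sum)

lemma eigenvector_Re_Im_vec:
  assumes x: "x \<in> carrier_vec n" and Mx: "M *\<^sub>v x = c \<cdot>\<^sub>v x" and c: "Im c = 0"
  shows "M *\<^sub>v Re_vec x = c \<cdot>\<^sub>v Re_vec x" and "M *\<^sub>v Im_vec x = c \<cdot>\<^sub>v Im_vec x"
proof -
  have "Re_vec (c \<cdot>\<^sub>v x) = c \<cdot>\<^sub>v Re_vec x" and "Im_vec (c \<cdot>\<^sub>v x) = c \<cdot>\<^sub>v Im_vec x"
    using c by (auto intro!: eq_vecI simp: Re_vec_def Im_vec_def complex_eq_iff)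
  then show "M *\<^sub>v Re_vec x = c \<cdot>\<^sub>v Re_vec x" and "M *\<^sub>v Im_vec x = c \<cdot>\<^sub>v Im_vec x"
    by (simp_all add: M_mult_Re_vec[OF x] M_mult_Im_vec[OF x] Mx)
qed

definition inner_w :: "complex vec \<Rightarrow> complex vec \<Rightarrow> complex" where
  "inner_w x y = (\<Sum>i = 0..<n. complex_of_real (w i) * cnj (x $ i) * y $ i)"

lemma inner_w_M:
  assumes x: "x \<in> carrier_vec n" and y: "y \<in> carrier_vec n"
  shows "inner_w x (M *\<^sub>v y) = inner_w (M *\<^sub>v x) y"
proof -
  have "inner_w x (M *\<^sub>v y)
      = (\<Sum>i = 0..<n. \<Sum>j = 0..<n. complex_of_real (w i * m i j) * cnj (x $ i) * y $ j)"
    unfolding inner_w_def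
    by (intro sum.cong refl) (simp add: row_M_scalar_prod y sum_distrib_left mult_ac)
  also have "\<dots> = (\<Sum>i = 0..<n. \<Sum>j = 0..<n. complex_of_real (w j * m j i) * cnj (x $ i) * y $ j)"
    by (intro sum.cong refl) (simp add: detailed_balance)
  also have "\<dots> = (\<Sum>j = 0..<n. \<Sum>i = 0..<n. complex_of_real (w j * m j i) * cnj (x $ i) * y $ j)"
    by (rule sum.swap)
  also have "\<dots> = inner_w (M *\<^sub>v x) y"
    unfolding inner_w_def
    by (intro sum.cong refl) (simp add: row_M_scalar_prod x sum_distrib_left sum_distrib_right mult_ac)
  finally show ?thesis .
qed

lemma inner_w_add_left:
  "x \<in> carrier_vec n \<Longrightarrow> y \<in> carrier_vec n \<Longrightarrow> inner_w (x + y) z = inner_w x z + inner_w y z"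
  by (simp add: inner_w_def algebra_simps sum.distrib)

lemma inner_w_smult_left: "x \<in> carrier_vec n \<Longrightarrow> inner_w (k \<cdot>\<^sub>v x) z = cnj k * inner_w x z"
  by (simp add: inner_w_def sum_distrib_left mult_ac)

lemma inner_w_smult_right: "z \<in> carrier_vec n \<Longrightarrow> inner_w x (k \<cdot>\<^sub>v z) = k * inner_w x z"
  by (simp add: inner_w_def sum_distrib_left mult_ac)

lemma inner_w_self_eq_0:
  assumes x: "x \<in> carrier_vec n" and x0: "inner_w x x = 0"
  shows "x = 0\<^sub>v n"
proof -
  have "inner_w x x = complex_of_real (\<Sum>i = 0..<n. w i * ((Re (x $ i))\<^sup>2 + (Im (x $ i))\<^sup>2))"
    unfolding inner_w_def of_real_sum
    by (intro sum.cong refl) (simp add: complex_mult_cnj mult_ac)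
  with x0 have "(\<Sum>i = 0..<n. w i * ((Re (x $ i))\<^sup>2 + (Im (x $ i))\<^sup>2)) = 0"
    by (simp only: of_real_eq_0_iff)
  then have "\<forall>i\<in>{0..<n}. w i * ((Re (x $ i))\<^sup>2 + (Im (x $ i))\<^sup>2) = 0"
    by (subst sum_nonneg_eq_0_iff[symmetric])
      (auto intro!: mult_nonneg_nonneg simp: less_imp_le weight_pos)
  then show ?thesis
    using x weight_pos by (intro eq_vecI) (auto simp: less_le complex_eq_iff add_nonneg_eq_0_iff)
qed

lemma Im_eigenvalue_eq_0:
  assumes "eigenvector M x c" shows "Im c = 0"
proof -
  from assms have x: "x \<in> carrier_vec n" "x \<noteq> 0\<^sub>v n" and Mx: "M *\<^sub>v x = c \<cdot>\<^sub>v x"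
    unfolding eigenvector_def by auto
  have "c * inner_w x x = cnj c * inner_w x x"
    using inner_w_M[OF x(1) x(1)] by (simp add: Mx inner_w_smult_left inner_w_smult_right x(1))
  moreover have "inner_w x x \<noteq> 0" using inner_w_self_eq_0 x by auto
  ultimately have "cnj c = c" by simp
  then show ?thesis by (simp add: complex_eq_iff)
qed

text \<open>Self-adjointness excludes Jordan chains of length 2: as \<open>e\<close> is real,
  \<open>inner_w y y = inner_w (M v - e v) y = inner_w v (M y) - e * inner_w v y = 0\<close>.\<close>

lemma no_jordan_chain:
  assumes v: "v \<in> carrier_vec n" and y: "y \<in> carrier_vec n"
    and My: "M *\<^sub>v y = e \<cdot>\<^sub>v y" and Mv: "M *\<^sub>v v = e \<cdot>\<^sub>v v + y"
  shows "y = 0\<^sub>v n"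
proof (rule ccontr)
  assume y0: "y \<noteq> 0\<^sub>v n"
  with y My have "Im e = 0" by (intro Im_eigenvalue_eq_0) (simp add: eigenvector_def)
  then have e: "cnj e = e" by (simp add: complex_eq_iff)
  have "e * inner_w v y = inner_w (M *\<^sub>v v) y"
    by (simp add: inner_w_M[OF v y, symmetric] My inner_w_smult_right y)
  also have "\<dots> = e * inner_w v y + inner_w y y"
    using v y by (simp add: Mv inner_w_add_left inner_w_smult_left e)
  finally have "inner_w y y = 0" by simp
  with y y0 show False by (simp add: inner_w_self_eq_0)
qed

lemma mat_kernel_char_matrix_square:
  "mat_kernel (char_matrix M e ^\<^sub>m 2) = mat_kernel (char_matrix M e)"
proof -
  let ?C = "char_matrix M e"
  have C: "?C \<in> carrier_mat n n" by simp
  have dim: "dim_row ?C = n" "dim_col ?C = n" by (simp_all add: char_matrix_def)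
  have C2: "?C ^\<^sub>m 2 = ?C * ?C" using C by (simp add: numeral_2_eq_2)
  have key: "?C *\<^sub>v (?C *\<^sub>v v) = 0\<^sub>v n \<longleftrightarrow> ?C *\<^sub>v v = 0\<^sub>v n" if v: "v \<in> carrier_vec n" for v
  proof
    assume CCv: "?C *\<^sub>v (?C *\<^sub>v v) = 0\<^sub>v n"
    have "M *\<^sub>v (?C *\<^sub>v v) = e \<cdot>\<^sub>v (?C *\<^sub>v v) + ?C *\<^sub>v (?C *\<^sub>v v)"
      by (rule mult_vec_char_matrix[OF M_carrier mult_mat_vec_carrier[OF C v]])
    then have "M *\<^sub>v (?C *\<^sub>v v) = e \<cdot>\<^sub>v (?C *\<^sub>v v)"
      using C v by (simp add: CCv)
    moreover have "M *\<^sub>v v = e \<cdot>\<^sub>v v + ?C *\<^sub>v v"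
      using v by (rule mult_vec_char_matrix[OF M_carrier])
    ultimately show "?C *\<^sub>v v = 0\<^sub>v n"
      by (rule no_jordan_chain[OF v mult_mat_vec_carrier[OF C v]])
  qed (use dim in \<open>auto intro!: eq_vecI\<close>)
  show ?thesis by (auto simp: mat_kernel_def dim C2 assoc_mult_mat_vec[OF C C] key)
qed

lemma dim_gen_eigenspace_2_eq_1: "dim_gen_eigenspace M e 2 = dim_gen_eigenspace M e 1"
  by (simp add: dim_gen_eigenspace_def kernel_dim_def mat_kernel_char_matrix_square)

lemma jordan_nf_blocks_of_size_1:
  assumes jnf: "jordan_nf M n_as"
  shows "\<forall>b\<in>set n_as. fst b = 1"
proof
  fix b assume b: "b \<in> set n_as"
  obtain s e where b_eq: "b = (s, e)" by force
  let ?sizes = "map fst (filter (\<lambda>(_, e'). e' = e) n_as)"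
  have "sum_list (map (min 2) ?sizes) = sum_list (map (min 1) ?sizes)"
    using dim_gen_eigenspace_2_eq_1[of e] unfolding dim_gen_eigenspace[OF jnf] .
  moreover have "s \<in> set ?sizes" using b b_eq by force
  ultimately have "s \<le> 1" by (rule sum_list_min_2_eq_min_1)
  moreover have "s \<noteq> 0" using jnf b b_eq unfolding jordan_nf_def by force
  ultimately show "fst b = 1" using b_eq by simp
qed

lemma diagonalization:
  obtains S S' d where "S \<in> carrier_mat n n" "S' \<in> carrier_mat n n"
    "S * S' = 1\<^sub>m n" "S' * S = 1\<^sub>m n" "M * S = S * mat_diag n d" "S' * M = mat_diag n d * S'"
    "\<forall>c. alg_mult M c = card {i. i < n \<and> d i = c}"
proof -
  obtain as where "char_poly M = (\<Prod>a\<leftarrow>as. [:- a, 1:])"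
    using char_poly_factorized[OF M_carrier] by blast
  from jordan_nf_exists[OF M_carrier this] obtain n_as where jnf: "jordan_nf M n_as" ..
  note blocks = jordan_nf_blocks_of_size_1[OF jnf]
  define d where "d i = snd (n_as ! i)" for i
  have "similar_mat M (mat_diag (length n_as) d)"
    using jnf unfolding jordan_nf_def jordan_matrix_blocks_of_size_1[OF blocks] d_def by simp
  then obtain S S' where wit: "similar_mat_wit M (mat_diag (length n_as) d) S S'"
    unfolding similar_mat_def by auto
  have len: "length n_as = n"
    using similar_mat_witD2(5)[OF M_carrier wit] by (metis carrier_matD(1) mat_diag_dim)
  note wit = wit[unfolded len]
  have "alg_mult M c = card {i. i < n \<and> d i = c}" for c
  proof -
    have "alg_mult M c = sum_list (map fst (filter (\<lambda>b. snd b = c) n_as))"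
      unfolding alg_mult_def by (rule jordan_nf_order[OF jnf])
    also have "\<dots> = length (filter (\<lambda>b. snd b = c) n_as)"
      using blocks by (induction n_as) auto
    also have "\<dots> = card {i. i < n \<and> d i = c}"
      by (simp add: length_filter_conv_card d_def len)
    finally show ?thesis .
  qed
  then show ?thesis
    using similar_mat_witD2[OF M_carrier wit] similar_mat_wit_mult_commute[OF M_carrier wit]
    by (intro that[of S S' d]) simp_all
qed

lemma eigenvector_multiple_if_alg_mult_1:
  assumes mult: "alg_mult M c = 1"
    and x: "x \<in> carrier_vec n" "M *\<^sub>v x = c \<cdot>\<^sub>v x"
    and z: "z \<in> carrier_vec n" "M *\<^sub>v z = c \<cdot>\<^sub>v z" "z \<noteq> 0\<^sub>v n"
  shows "\<exists>k. x = k \<cdot>\<^sub>v z"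
proof -
  obtain S S' d where S: "S \<in> carrier_mat n n" "S' \<in> carrier_mat n n"
    and inv: "S * S' = 1\<^sub>m n" "S' * S = 1\<^sub>m n"
    and diag: "M * S = S * mat_diag n d" "S' * M = mat_diag n d * S'"
    and alg: "\<forall>c. alg_mult M c = card {i. i < n \<and> d i = c}"
    by (rule diagonalization)
  have "card {i. i < n \<and> d i = c} = 1" using mult alg by simp
  then obtain i0 where I: "{i. i < n \<and> d i = c} = {i0}" by (rule card_1_singletonE)
  then have i0: "i0 < n" and other: "\<And>i. i < n \<Longrightarrow> i \<noteq> i0 \<Longrightarrow> d i \<noteq> c" by auto
  have expand: "y = (S' *\<^sub>v y) $ i0 \<cdot>\<^sub>v col S i0"
    if y: "y \<in> carrier_vec n" "M *\<^sub>v y = c \<cdot>\<^sub>v y" for y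
  proof -
    define a where "a = (S' *\<^sub>v y) $ i0"
    have "S' *\<^sub>v y = a \<cdot>\<^sub>v unit_vec n i0"
    proof (rule eq_vecI)
      fix i assume "i < dim_vec (a \<cdot>\<^sub>v unit_vec n i0)"
      then have i: "i < n" by simp
      show "(S' *\<^sub>v y) $ i = (a \<cdot>\<^sub>v unit_vec n i0) $ i"
        using diagonalized_coordinate_eq_0[OF M_carrier S(2) diag(2) y i other[OF i]] i i0
        by (cases "i = i0") (auto simp: a_def)
    qed (use S in simp)
    then have "S *\<^sub>v (S' *\<^sub>v y) = a \<cdot>\<^sub>v col S i0"
      using S i0 by (simp add: mult_mat_vec mult_unit_vec_eq_col)
    moreover have "S *\<^sub>v (S' *\<^sub>v y) = y"
      using y by (simp add: assoc_mult_mat_vec[OF S y(1), symmetric] inv(1))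
    ultimately show ?thesis by (simp add: a_def)
  qed
  define a b where "a = (S' *\<^sub>v x) $ i0" and "b = (S' *\<^sub>v z) $ i0"
  have x_eq: "x = a \<cdot>\<^sub>v col S i0" and z_eq: "z = b \<cdot>\<^sub>v col S i0"
    using expand[OF x] expand[OF z(1,2)] by (simp_all add: a_def b_def)
  have "b \<noteq> 0"
  proof
    assume "b = 0"
    then have "z = 0\<^sub>v n"
      using z_eq S i0 by (intro eq_vecI) (auto simp: carrier_vecD[OF z(1)])
    with z(3) show False ..
  qed
  then have "x = (a / b) \<cdot>\<^sub>v z" by (simp add: x_eq z_eq smult_smult_assoc)
  then show ?thesis ..
qed

lemma eigenvector_not_multiple_if_alg_mult_ge_2:
  assumes mult: "2 \<le> alg_mult M c" and z: "z \<in> carrier_vec n"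
  shows "\<exists>x\<in>carrier_vec n. M *\<^sub>v x = c \<cdot>\<^sub>v x \<and> (\<forall>k. x \<noteq> k \<cdot>\<^sub>v z)"
proof (rule ccontr)
  assume multiples: "\<not> ?thesis"
  obtain S S' d where S: "S \<in> carrier_mat n n" "S' \<in> carrier_mat n n"
    and inv: "S * S' = 1\<^sub>m n" "S' * S = 1\<^sub>m n"
    and diag: "M * S = S * mat_diag n d" "S' * M = mat_diag n d * S'"
    and alg: "\<forall>c. alg_mult M c = card {i. i < n \<and> d i = c}"
    by (rule diagonalization)
  let ?I = "{i. i < n \<and> d i = c}"
  have card_I: "2 \<le> card ?I" using mult alg by simp
  then have "?I \<noteq> {}" by (intro notI) simp
  then obtain i0 where i0: "i0 \<in> ?I" by blast
  have "1 \<le> card (?I - {i0})" using card_I i0 by (simp add: card_Diff_singleton)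
  then have "?I - {i0} \<noteq> {}" by (intro notI) simp
  then obtain i1 where i1: "i1 \<in> ?I" "i1 \<noteq> i0" by blast
  have unit: "\<exists>k. unit_vec n i = k \<cdot>\<^sub>v (S' *\<^sub>v z)" if i: "i \<in> ?I" for i
  proof -
    have "col S i \<in> carrier_vec n" "M *\<^sub>v col S i = c \<cdot>\<^sub>v col S i"
      using i S diagonalized_col_eigenvector[OF M_carrier S(1) diag(1)] by auto
    then obtain k where "col S i = k \<cdot>\<^sub>v z" using multiples by blast
    then have "S' *\<^sub>v col S i = k \<cdot>\<^sub>v (S' *\<^sub>v z)" using S z by (simp add: mult_mat_vec)
    moreover have "S' *\<^sub>v col S i = unit_vec n i"
      using S i by (simp flip: col_mult2 add: inv(2))
    ultimately show ?thesis by auto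
  qed
  obtain k0 where k0: "unit_vec n i0 = k0 \<cdot>\<^sub>v (S' *\<^sub>v z)" using unit[OF i0] ..
  obtain k1 where k1: "unit_vec n i1 = k1 \<cdot>\<^sub>v (S' *\<^sub>v z)" using unit[OF i1(1)] ..
  have "1 = k0 * (S' *\<^sub>v z) $ i0" "0 = k1 * (S' *\<^sub>v z) $ i0" "1 = k1 * (S' *\<^sub>v z) $ i1"
    using arg_cong[OF k0, of "\<lambda>v. v $ i0"] arg_cong[OF k1, of "\<lambda>v. v $ i0"]
      arg_cong[OF k1, of "\<lambda>v. v $ i1"] i0 i1 S z by auto
  then show False by auto
qed

lemma intertwiner_fixed:
  assumes N: "N \<in> carrier_mat k k" and Z: "Z \<in> carrier_mat n k"
    and MZ: "M * Z = Z * transpose_mat N"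
    and common: "\<And>c. eigenvalue M c \<Longrightarrow> eigenvalue N c \<Longrightarrow> c = 1"
  shows "M * Z = Z" and "Z * transpose_mat N = Z"
proof -
  obtain S S' d where S: "S \<in> carrier_mat n n" "S' \<in> carrier_mat n n"
    and inv: "S * S' = 1\<^sub>m n" "S' * S = 1\<^sub>m n"
    and diag: "M * S = S * mat_diag n d" "S' * M = mat_diag n d * S'"
    and alg: "\<forall>c. alg_mult M c = card {i. i < n \<and> d i = c}"
    by (rule diagonalization)
  define D where "D = mat_diag n d"
  define W where "W = S' * Z"
  have D: "D \<in> carrier_mat n n" and W: "W \<in> carrier_mat n k"
    using S Z by (simp_all add: D_def W_def)
  have NT: "transpose_mat N \<in> carrier_mat k k" using N by simp
  have "D * W = (S' * M) * Z"
    using S Z by (simp add: D_def W_def diag(2) assoc_mult_mat[of _ n n _ n _ k])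
  also have "\<dots> = W * transpose_mat N"
    using S Z NT by (simp add: W_def MZ assoc_mult_mat[of _ n n _ n _ k]
        assoc_mult_mat[of _ n n _ k _ k])
  finally have DW: "D * W = W * transpose_mat N" .
  have DW_W: "D * W = W"
  proof (rule eq_matI)
    fix i j assume "i < dim_row W" "j < dim_col W"
    then have i: "i < n" and j: "j < k" using W by auto
    show "(D * W) $$ (i, j) = W $$ (i, j)"
    proof (cases "d i = 1")
      case False
      have "0 < alg_mult M (d i)" using i by (auto simp: alg card_gt_0_iff)
      then have "\<not> eigenvalue N (d i)"
        using False common by (auto simp: eigenvalue_iff_alg_mult_pos[OF M_carrier])
      then have "row W i = 0\<^sub>v k"
        using diagonal_intertwiner_row_eq_0[OF W N DW[unfolded D_def] i] by simp
      then have "W $$ (i, j) = 0"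
        using W i j by (metis carrier_matD index_row(1) index_zero_vec(1))
      then show ?thesis using W i j by (simp add: D_def mat_diag_mult_left[OF W])
    qed (use W i j in \<open>simp add: D_def mat_diag_mult_left[OF W]\<close>)
  qed (use D W in auto)
  have Z_SW: "Z = S * W"
    using S Z by (simp add: W_def assoc_mult_mat[of _ n n _ n _ k, symmetric] inv(1))
  show NZ: "Z * transpose_mat N = Z"
    using S W NT D by (simp add: Z_SW assoc_mult_mat[of _ n n _ k _ k] DW[symmetric] DW_W
        flip: assoc_mult_mat[of S n n D n W k])
  show "M * Z = Z" by (simp add: MZ NZ)
qed

end

section \<open>Eigenfunctions of fully supported graphs\<close>

definition eigenfun :: "'a set \<Rightarrow> ('a \<Rightarrow> 'a \<Rightarrow> real) \<Rightarrow> real \<Rightarrow> ('a \<Rightarrow> real) \<Rightarrow> bool" where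
  "eigenfun U \<alpha> lam F \<longleftrightarrow> (\<forall>u\<in>U. (\<Sum>u'\<in>U. \<alpha> u u' * F u') = lam * degree_fun U \<alpha> u * F u)"

locale fully_supported_graph =
  fixes U :: "'a set" and \<alpha> :: "'a \<Rightarrow> 'a \<Rightarrow> real"
  assumes fully_supported: "fully_supported U \<alpha>"
begin

abbreviation p :: "'a \<Rightarrow> real" where "p \<equiv> degree_fun U \<alpha>"

abbreviation xs :: "'a list" where "xs \<equiv> enum_set U"

abbreviation pos :: "'a \<Rightarrow> nat" where "pos \<equiv> inv_into {0..<length xs} ((!) xs)"

lemma weight_fun: "weight_fun U \<alpha>"
  using fully_supported by (simp add: fully_supported_def)

lemma finite_U: "finite U"
  and \<alpha>_nonneg: "0 \<le> \<alpha> u u'"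
  and \<alpha>_sym: "\<alpha> u u' = \<alpha> u' u"
  and \<alpha>_outside: "u \<notin> U \<or> u' \<notin> U \<Longrightarrow> \<alpha> u u' = 0"
  using weight_fun by (auto simp: weight_fun_def)

lemma p_pos: "u \<in> U \<Longrightarrow> 0 < p u"
  using fully_supported by (simp add: fully_supported_def)

lemma sum_p: "(\<Sum>u\<in>U. p u) = 1"
  using weight_fun by (simp add: weight_fun_def degree_fun_def)

lemma sum_\<alpha>_left: "(\<Sum>u\<in>U. \<alpha> u u') = p u'"
  by (simp add: degree_fun_def \<alpha>_sym)

lemma U_nonempty: "U \<noteq> {}"
  using sum_p by auto

lemma distinct_xs: "distinct xs" and set_xs: "set xs = U"
proof -
  obtain ys where "distinct ys \<and> set ys = U" using finite_distinct_list[OF finite_U] by blast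
  then have "distinct xs \<and> set xs = U" unfolding enum_set_def by (rule someI)
  then show "distinct xs" "set xs = U" by simp_all
qed

lemma bij_betw_nth_xs: "bij_betw ((!) xs) {0..<length xs} U"
  by (rule bij_betw_nth[OF distinct_xs]) (simp_all add: set_xs atLeast0LessThan)

lemma nth_xs_in_U: "i < length xs \<Longrightarrow> xs ! i \<in> U"
  using bij_betw_nth_xs by (auto dest: bij_betwE)

lemma pos_less: "u \<in> U \<Longrightarrow> pos u < length xs"
  and nth_pos: "u \<in> U \<Longrightarrow> xs ! pos u = u"
  and pos_nth: "i < length xs \<Longrightarrow> pos (xs ! i) = i"
  using bij_betw_inv_into_left[OF bij_betw_nth_xs] bij_betw_inv_into_right[OF bij_betw_nth_xs]
    bij_betw_imp_surj_on[OF bij_betw_inv_into[OF bij_betw_nth_xs]] by auto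

lemma sum_U_nth: "(\<Sum>u\<in>U. f u) = (\<Sum>i = 0..<length xs. f (xs ! i))"
  by (rule sum.reindex_bij_betw[OF bij_betw_nth_xs, symmetric])

sublocale reversible_mat "length xs" "\<lambda>i j. \<alpha> (xs ! i) (xs ! j) / p (xs ! i)" "\<lambda>i. p (xs ! i)"
  by unfold_locales (simp_all add: p_pos nth_xs_in_U less_imp_neq[symmetric] \<alpha>_sym)

lemma transition_mat_eq: "transition_mat U \<alpha> = M"
  by (simp add: transition_mat_def Let_def M_def)

definition vec_of_fun :: "('a \<Rightarrow> real) \<Rightarrow> complex vec" where
  "vec_of_fun F = vec (length xs) (\<lambda>i. complex_of_real (F (xs ! i)))"

lemma vec_of_fun_carrier [simp]: "vec_of_fun F \<in> carrier_vec (length xs)"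
  by (simp add: vec_of_fun_def)

lemma M_mult_vec_of_fun:
  "M *\<^sub>v vec_of_fun F
    = vec (length xs) (\<lambda>i. complex_of_real ((\<Sum>u'\<in>U. \<alpha> (xs ! i) u' * F u') / p (xs ! i)))"
  by (rule eq_vecI) (simp_all add: row_M_scalar_prod vec_of_fun_def sum_U_nth sum_divide_distrib)

lemma ball_U_iff_nth: "(\<forall>u\<in>U. P u) \<longleftrightarrow> (\<forall>i<length xs. P (xs ! i))"
  by (metis nth_xs_in_U pos_less nth_pos)

lemma eigenfun_iff_mult_vec:
  "eigenfun U \<alpha> lam F \<longleftrightarrow> M *\<^sub>v vec_of_fun F = complex_of_real lam \<cdot>\<^sub>v vec_of_fun F"
proof -
  have "eigenfun U \<alpha> lam F \<longleftrightarrow> (\<forall>u\<in>U. (\<Sum>u'\<in>U. \<alpha> u u' * F u') / p u = lam * F u)"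
    unfolding eigenfun_def
    by (intro ball_cong refl) (simp add: divide_eq_eq mult_ac less_imp_neq[OF p_pos, symmetric])
  also have "\<dots> \<longleftrightarrow> M *\<^sub>v vec_of_fun F = complex_of_real lam \<cdot>\<^sub>v vec_of_fun F"
    unfolding ball_U_iff_nth M_mult_vec_of_fun
    by (auto simp: vec_eq_iff vec_of_fun_def
        simp del: of_real_divide of_real_sum simp flip: of_real_mult)
  finally show ?thesis .
qed

abbreviation one_vec :: "complex vec" where "one_vec \<equiv> vec_of_fun (\<lambda>_. 1)"

lemma vec_of_fun_eq_0_iff: "vec_of_fun F = 0\<^sub>v (length xs) \<longleftrightarrow> (\<forall>u\<in>U. F u = 0)"
  by (simp add: vec_eq_iff vec_of_fun_def ball_U_iff_nth)

lemma vec_of_fun_eq_smult_one_vec_iff: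
  "vec_of_fun F = k \<cdot>\<^sub>v one_vec \<longleftrightarrow> (\<forall>u\<in>U. complex_of_real (F u) = k)"
  by (simp add: vec_eq_iff vec_of_fun_def ball_U_iff_nth)

lemma vec_of_fun_Re_part: "x \<in> carrier_vec (length xs) \<Longrightarrow> vec_of_fun (\<lambda>u. Re (x $ pos u)) = Re_vec x"
  and vec_of_fun_Im_part: "x \<in> carrier_vec (length xs) \<Longrightarrow> vec_of_fun (\<lambda>u. Im (x $ pos u)) = Im_vec x"
  by (auto intro!: eq_vecI simp: vec_of_fun_def Re_vec_def Im_vec_def pos_nth)

lemma one_vec_nonzero: "one_vec \<noteq> 0\<^sub>v (length xs)"
  using U_nonempty by (simp add: vec_of_fun_eq_0_iff)

lemma eigenfun_const: "eigenfun U \<alpha> 1 (\<lambda>_. k)"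
  by (simp add: eigenfun_def degree_fun_def sum_distrib_right)

lemma eigenvalue_1: "eigenvalue M 1"
proof -
  have "M *\<^sub>v one_vec = 1 \<cdot>\<^sub>v one_vec"
    using eigenfun_const[of 1] by (simp add: eigenfun_iff_mult_vec)
  with one_vec_nonzero show ?thesis
    unfolding eigenvalue_def eigenvector_def by (intro exI[of _ one_vec]) simp
qed

lemma eigenfun_of_eigenvalue:
  assumes "eigenvalue M c"
  shows "Im c = 0 \<and> (\<exists>F. eigenfun U \<alpha> (Re c) F \<and> (\<exists>u\<in>U. F u \<noteq> 0))"
proof -
  obtain x where x: "eigenvector M x c" using assms by (auto simp: eigenvalue_def)
  then have c: "Im c = 0" by (rule Im_eigenvalue_eq_0)
  then have c_eq: "complex_of_real (Re c) = c" by (simp add: complex_eq_iff)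
  from x have x_carrier: "x \<in> carrier_vec (length xs)" and "x \<noteq> 0\<^sub>v (length xs)"
    and Mx: "M *\<^sub>v x = c \<cdot>\<^sub>v x"
    by (auto simp: eigenvector_def)
  obtain F where "vec_of_fun F \<noteq> 0\<^sub>v (length xs)" "M *\<^sub>v vec_of_fun F = c \<cdot>\<^sub>v vec_of_fun F"
  proof (cases "Re_vec x = 0\<^sub>v (length xs)")
    case True
    with x_carrier \<open>x \<noteq> 0\<^sub>v (length xs)\<close> have "Im_vec x \<noteq> 0\<^sub>v (length xs)"
      using Re_vec_Im_vec_eq_0 by blast
    then show ?thesis
      using eigenvector_Re_Im_vec(2)[OF x_carrier Mx c] vec_of_fun_Im_part[OF x_carrier]
      by (intro that[of "\<lambda>u. Im (x $ pos u)"]) simp_all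
  next
    case False
    then show ?thesis
      using eigenvector_Re_Im_vec(1)[OF x_carrier Mx c] vec_of_fun_Re_part[OF x_carrier]
      by (intro that[of "\<lambda>u. Re (x $ pos u)"]) simp_all
  qed
  with c c_eq show ?thesis
    by (auto simp: eigenfun_iff_mult_vec vec_of_fun_eq_0_iff)
qed

lemma nonconstant_eigenfun_1:
  assumes "2 \<le> alg_mult M 1"
  shows "\<exists>F. eigenfun U \<alpha> 1 F \<and> (\<exists>u\<in>U. \<exists>u'\<in>U. F u \<noteq> F u')"
proof -
  obtain x where x_carrier: "x \<in> carrier_vec (length xs)" and Mx: "M *\<^sub>v x = 1 \<cdot>\<^sub>v x"
    and not_const: "\<And>k. x \<noteq> k \<cdot>\<^sub>v one_vec"
    using eigenvector_not_multiple_if_alg_mult_ge_2[OF assms vec_of_fun_carrier] by blast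
  have Im1: "Im 1 = 0" by simp
  obtain F where F: "M *\<^sub>v vec_of_fun F = 1 \<cdot>\<^sub>v vec_of_fun F" "\<And>k. vec_of_fun F \<noteq> k \<cdot>\<^sub>v one_vec"
  proof (cases "\<exists>a. Re_vec x = a \<cdot>\<^sub>v one_vec")
    case True
    then obtain a where a: "Re_vec x = a \<cdot>\<^sub>v one_vec" ..
    have "Im_vec x \<noteq> b \<cdot>\<^sub>v one_vec" for b
    proof
      assume "Im_vec x = b \<cdot>\<^sub>v one_vec"
      then have "x = (a + \<i> * b) \<cdot>\<^sub>v one_vec"
        using Re_vec_plus_Im_vec[of x] a by (simp add: add_smult_distrib_vec smult_smult_assoc)
      with not_const show False by blast
    qed
    then show ?thesis
      using eigenvector_Re_Im_vec(2)[OF x_carrier Mx Im1] vec_of_fun_Im_part[OF x_carrier]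
      by (intro that[of "\<lambda>u. Im (x $ pos u)"]) simp_all
  next
    case False
    then show ?thesis
      using eigenvector_Re_Im_vec(1)[OF x_carrier Mx Im1] vec_of_fun_Re_part[OF x_carrier]
      by (intro that[of "\<lambda>u. Re (x $ pos u)"]) simp_all
  qed
  obtain u0 where u0: "u0 \<in> U" using U_nonempty by blast
  have "\<exists>u\<in>U. F u \<noteq> F u0"
    using F(2)[of "complex_of_real (F u0)"] by (auto simp: vec_of_fun_eq_smult_one_vec_iff)
  with F(1) u0 show ?thesis by (auto simp: eigenfun_iff_mult_vec)
qed

lemma eigenfun_1_eq_1:
  assumes mult: "alg_mult M 1 = 1" and F: "eigenfun U \<alpha> 1 F"
    and normalized: "(\<Sum>u\<in>U. p u * F u) = 1" and u: "u \<in> U"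
  shows "F u = 1"
proof -
  have "M *\<^sub>v vec_of_fun F = 1 \<cdot>\<^sub>v vec_of_fun F" and "M *\<^sub>v one_vec = 1 \<cdot>\<^sub>v one_vec"
    using F eigenfun_const[of 1] by (simp_all add: eigenfun_iff_mult_vec)
  then obtain k where "vec_of_fun F = k \<cdot>\<^sub>v one_vec"
    using eigenvector_multiple_if_alg_mult_1[OF mult vec_of_fun_carrier _ vec_of_fun_carrier]
      one_vec_nonzero by blast
  then have const: "\<And>u. u \<in> U \<Longrightarrow> F u = Re k"
    by (auto simp: vec_of_fun_eq_smult_one_vec_iff dest!: arg_cong[where f = Re])
  have "(\<Sum>u\<in>U. p u * F u) = Re k"
    by (simp add: const sum_distrib_right[symmetric] sum_p)
  with normalized const[OF u] show ?thesis by simp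
qed

lemma sum_p_eigenfun:
  assumes "eigenfun U \<alpha> lam F"
  shows "lam * (\<Sum>u\<in>U. p u * F u) = (\<Sum>u\<in>U. p u * F u)"
proof -
  have "lam * (\<Sum>u\<in>U. p u * F u) = (\<Sum>u\<in>U. \<Sum>u'\<in>U. \<alpha> u u' * F u')"
    using assms by (simp add: eigenfun_def sum_distrib_left mult_ac)
  also have "\<dots> = (\<Sum>u'\<in>U. \<Sum>u\<in>U. \<alpha> u u' * F u')" by (rule sum.swap)
  also have "\<dots> = (\<Sum>u'\<in>U. p u' * F u')"
    by (simp add: sum_distrib_right[symmetric] sum_\<alpha>_left)
  finally show ?thesis .
qed

lemma eigenfun_orthogonal_p:
  "eigenfun U \<alpha> lam F \<Longrightarrow> lam \<noteq> 1 \<Longrightarrow> (\<Sum>u\<in>U. p u * F u) = 0"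
  using sum_p_eigenfun[of lam F] by auto

lemma centered_eigenfun_1:
  assumes F: "eigenfun U \<alpha> 1 F" and u: "u1 \<in> U" "u2 \<in> U" "F u1 \<noteq> F u2"
  shows "\<exists>F'. eigenfun U \<alpha> 1 F' \<and> (\<Sum>u\<in>U. p u * F' u) = 0 \<and> (\<exists>u\<in>U. F' u \<noteq> 0)"
proof (intro exI conjI)
  define m where "m = (\<Sum>u\<in>U. p u * F u)"
  show "eigenfun U \<alpha> 1 (\<lambda>u. F u - m)"
    using F by (simp add: eigenfun_def degree_fun_def algebra_simps sum_subtractf sum_distrib_left)
  show "(\<Sum>u\<in>U. p u * (F u - m)) = 0"
    by (simp add: right_diff_distrib sum_subtractf m_def sum_distrib_right[symmetric] sum_p)
  show "\<exists>u\<in>U. F u - m \<noteq> 0" using u by (metis eq_iff_diff_eq_0)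
qed

lemma eigenfun_edge:
  assumes F: "eigenfun U \<alpha> lam F" and lam: "lam\<^sup>2 = 1"
    and u: "u \<in> U" "u' \<in> U" and edge: "\<alpha> u u' \<noteq> 0"
  shows "F u' = lam * F u"
proof -
  \<comment> \<open>The Dirichlet-type sum below equals \<open>(1 - lam\<^sup>2) * E\<close>.\<close>
  define E where "E = (\<Sum>u\<in>U. p u * (F u)\<^sup>2)"
  have "(\<Sum>x\<in>U. \<Sum>y\<in>U. \<alpha> x y * (F y - lam * F x)\<^sup>2)
      = (\<Sum>x\<in>U. \<Sum>y\<in>U. \<alpha> x y * (F y)\<^sup>2) - 2 * lam * (\<Sum>x\<in>U. F x * (\<Sum>y\<in>U. \<alpha> x y * F y))
        + lam\<^sup>2 * (\<Sum>x\<in>U. (F x)\<^sup>2 * (\<Sum>y\<in>U. \<alpha> x y))"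
    by (simp add: power2_eq_square algebra_simps sum.distrib sum_subtractf sum_distrib_left)
  also have "(\<Sum>x\<in>U. \<Sum>y\<in>U. \<alpha> x y * (F y)\<^sup>2) = E"
    by (subst sum.swap) (simp add: E_def sum_distrib_right[symmetric] sum_\<alpha>_left)
  also have "(\<Sum>x\<in>U. F x * (\<Sum>y\<in>U. \<alpha> x y * F y)) = lam * E"
    using F by (simp add: eigenfun_def E_def sum_distrib_left power2_eq_square mult_ac)
  also have "(\<Sum>x\<in>U. (F x)\<^sup>2 * (\<Sum>y\<in>U. \<alpha> x y)) = E"
    by (simp add: E_def degree_fun_def mult_ac)
  finally have "(\<Sum>x\<in>U. \<Sum>y\<in>U. \<alpha> x y * (F y - lam * F x)\<^sup>2) = 0"
    using lam by (simp add: algebra_simps power2_eq_square)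
  then have "\<alpha> u u' * (F u' - lam * F u)\<^sup>2 = 0"
    using u finite_U by (simp add: sum_nonneg_eq_0_iff sum_nonneg \<alpha>_nonneg)
  with edge show ?thesis by simp
qed

end

section \<open>Perturbed product joinings\<close>

lemma small_perturbation_nonneg:
  fixes h :: "'a \<Rightarrow> real"
  assumes "finite S"
  obtains \<epsilon> where "0 < \<epsilon>" "\<forall>x\<in>S. 0 \<le> 1 + \<epsilon> * h x"
proof
  define B where "B = 1 + (\<Sum>x\<in>S. \<bar>h x\<bar>)"
  have B: "1 \<le> B" by (simp add: B_def sum_nonneg)
  then show "0 < 1 / B" by simp
  show "\<forall>x\<in>S. 0 \<le> 1 + 1 / B * h x"
  proof
    fix x assume "x \<in> S"
    then have "\<bar>h x\<bar> \<le> (\<Sum>x\<in>S. \<bar>h x\<bar>)" using assms by (intro member_le_sum) auto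
    then have "\<bar>h x\<bar> \<le> B" by (simp add: B_def)
    then have "\<bar>1 / B * h x\<bar> \<le> 1" using B by (simp add: abs_mult divide_le_eq_1)
    then show "0 \<le> 1 + 1 / B * h x" by linarith
  qed
qed

locale two_graphs = G: fully_supported_graph U \<alpha> + H: fully_supported_graph V \<beta>
  for U :: "'a set" and \<alpha> :: "'a \<Rightarrow> 'a \<Rightarrow> real" and V :: "'b set" and \<beta> :: "'b \<Rightarrow> 'b \<Rightarrow> real"

locale common_eigenfun = two_graphs +
  fixes lam t :: real and f :: "'a \<Rightarrow> real" and g :: "'b \<Rightarrow> real"
  assumes eigen_f: "eigenfun U \<alpha> lam f" and eigen_g: "eigenfun V \<beta> lam g"
    and centered_f: "(\<Sum>u\<in>U. G.p u * f u) = 0" and centered_g: "(\<Sum>v\<in>V. H.p v * g v) = 0"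
    and edge_f: "\<And>u u'. u \<in> U \<Longrightarrow> u' \<in> U \<Longrightarrow> \<alpha> u u' \<noteq> 0 \<Longrightarrow>
      (lam - t) * f u' = (lam - t) * lam * f u"
    and edge_g: "\<And>v v'. v \<in> V \<Longrightarrow> v' \<in> V \<Longrightarrow> \<beta> v v' \<noteq> 0 \<Longrightarrow>
      (lam - t) * g v' = (lam - t) * lam * g v"
begin

definition h :: "'a \<times> 'b \<Rightarrow> 'a \<times> 'b \<Rightarrow> real" where
  "h x y = f (fst x) * g (snd x) + f (fst y) * g (snd y)
     - t * (f (fst x) * g (snd y) + f (fst y) * g (snd x))"

definition \<gamma> :: "real \<Rightarrow> 'a \<times> 'b \<Rightarrow> 'a \<times> 'b \<Rightarrow> real" where
  "\<gamma> \<epsilon> x y = \<alpha> (fst x) (fst y) * \<beta> (snd x) (snd y) * (1 + \<epsilon> * h x y)"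

abbreviation \<kappa> :: real where "\<kappa> \<equiv> 1 + lam\<^sup>2 - 2 * t * lam"

lemma sum_V_\<gamma>:
  assumes u: "u \<in> U" "u' \<in> U" and v: "v \<in> V"
  shows "(\<Sum>v'\<in>V. \<gamma> \<epsilon> (u, v) (u', v')) = \<alpha> u u' * H.p v * (1 + \<epsilon> * \<kappa> * f u * g v)"
proof -
  have "(\<Sum>v'\<in>V. \<gamma> \<epsilon> (u, v) (u', v')) = \<alpha> u u' *
      (\<Sum>v'\<in>V. \<beta> v v' * (1 + \<epsilon> * (f u - t * f u') * g v) + \<epsilon> * (f u' - t * f u) * (\<beta> v v' * g v'))"
    unfolding sum_distrib_left by (intro sum.cong refl) (simp add: \<gamma>_def h_def algebra_simps)
  also have "\<dots> = \<alpha> u u' * ((\<Sum>v'\<in>V. \<beta> v v') * (1 + \<epsilon> * (f u - t * f u') * g v)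
      + \<epsilon> * (f u' - t * f u) * (\<Sum>v'\<in>V. \<beta> v v' * g v'))"
    by (simp only: sum.distrib sum_distrib_left[symmetric] sum_distrib_right[symmetric])
  also have "\<dots> = \<alpha> u u' * H.p v * (1 + \<epsilon> * g v * (f u * (1 - t * lam) + f u' * (lam - t)))"
    using eigen_g v by (simp add: eigenfun_def degree_fun_def algebra_simps)
  also have "\<dots> = \<alpha> u u' * H.p v * (1 + \<epsilon> * \<kappa> * f u * g v)"
  proof (cases "\<alpha> u u' = 0")
    case False
    then have "f u' * (lam - t) = lam * (lam - t) * f u" using edge_f[OF u] by (simp add: mult_ac)
    then have "f u * (1 - t * lam) + f u' * (lam - t) = \<kappa> * f u"
      by (simp only:) (simp add: algebra_simps power2_eq_square)
    then show ?thesis by (simp add: mult_ac)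
  qed simp
  finally show ?thesis .
qed

lemma sum_U_\<gamma>:
  assumes u: "u \<in> U" and v: "v \<in> V" "v' \<in> V"
  shows "(\<Sum>u'\<in>U. \<gamma> \<epsilon> (u, v) (u', v')) = \<beta> v v' * G.p u * (1 + \<epsilon> * \<kappa> * f u * g v)"
proof -
  have "(\<Sum>u'\<in>U. \<gamma> \<epsilon> (u, v) (u', v')) = \<beta> v v' *
      (\<Sum>u'\<in>U. \<alpha> u u' * (1 + \<epsilon> * f u * (g v - t * g v')) + \<epsilon> * (g v' - t * g v) * (\<alpha> u u' * f u'))"
    unfolding sum_distrib_left by (intro sum.cong refl) (simp add: \<gamma>_def h_def algebra_simps)
  also have "\<dots> = \<beta> v v' * ((\<Sum>u'\<in>U. \<alpha> u u') * (1 + \<epsilon> * f u * (g v - t * g v'))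
      + \<epsilon> * (g v' - t * g v) * (\<Sum>u'\<in>U. \<alpha> u u' * f u'))"
    by (simp only: sum.distrib sum_distrib_left[symmetric] sum_distrib_right[symmetric])
  also have "\<dots> = \<beta> v v' * G.p u * (1 + \<epsilon> * f u * (g v * (1 - t * lam) + g v' * (lam - t)))"
    using eigen_f u by (simp add: eigenfun_def degree_fun_def algebra_simps)
  also have "\<dots> = \<beta> v v' * G.p u * (1 + \<epsilon> * \<kappa> * f u * g v)"
  proof (cases "\<beta> v v' = 0")
    case False
    then have "g v' * (lam - t) = lam * (lam - t) * g v" using edge_g[OF v] by (simp add: mult_ac)
    then have "g v * (1 - t * lam) + g v' * (lam - t) = \<kappa> * g v"
      by (simp only:) (simp add: algebra_simps power2_eq_square)
    then show ?thesis by (simp add: mult_ac)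
  qed simp
  finally show ?thesis .
qed

lemma degree_\<gamma>:
  assumes u: "u \<in> U" and v: "v \<in> V"
  shows "degree_fun (U \<times> V) (\<gamma> \<epsilon>) (u, v) = G.p u * H.p v * (1 + \<epsilon> * \<kappa> * f u * g v)"
proof -
  have "degree_fun (U \<times> V) (\<gamma> \<epsilon>) (u, v) = (\<Sum>u'\<in>U. \<Sum>v'\<in>V. \<gamma> \<epsilon> (u, v) (u', v'))"
    by (simp add: degree_fun_def sum.cartesian_product')
  also have "\<dots> = (\<Sum>u'\<in>U. \<alpha> u u' * (H.p v * (1 + \<epsilon> * \<kappa> * f u * g v)))"
    using u v by (intro sum.cong refl) (simp add: sum_V_\<gamma> mult_ac)
  also have "\<dots> = G.p u * H.p v * (1 + \<epsilon> * \<kappa> * f u * g v)"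
    by (simp add: degree_fun_def sum_distrib_right[symmetric])
  finally show ?thesis .
qed

lemma sum_V_degree_\<gamma>:
  assumes u: "u \<in> U"
  shows "(\<Sum>v\<in>V. degree_fun (U \<times> V) (\<gamma> \<epsilon>) (u, v)) = G.p u"
proof -
  have "(\<Sum>v\<in>V. degree_fun (U \<times> V) (\<gamma> \<epsilon>) (u, v))
      = (\<Sum>v\<in>V. G.p u * H.p v + (\<epsilon> * \<kappa> * G.p u * f u) * (H.p v * g v))"
    using u by (intro sum.cong refl) (simp add: degree_\<gamma> algebra_simps)
  also have "\<dots> = G.p u"
    by (simp add: sum.distrib H.sum_p centered_g flip: sum_distrib_left)
  finally show ?thesis .
qed

lemma sum_U_degree_\<gamma>:
  assumes v: "v \<in> V"
  shows "(\<Sum>u\<in>U. degree_fun (U \<times> V) (\<gamma> \<epsilon>) (u, v)) = H.p v"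
proof -
  have "(\<Sum>u\<in>U. degree_fun (U \<times> V) (\<gamma> \<epsilon>) (u, v))
      = (\<Sum>u\<in>U. H.p v * G.p u + (\<epsilon> * \<kappa> * H.p v * g v) * (G.p u * f u))"
    using v by (intro sum.cong refl) (simp add: degree_\<gamma> algebra_simps)
  also have "\<dots> = H.p v"
    by (simp add: sum.distrib G.sum_p centered_f flip: sum_distrib_left)
  finally show ?thesis .
qed

lemma weight_fun_\<gamma>:
  assumes nonneg: "\<forall>x\<in>U \<times> V. \<forall>y\<in>U \<times> V. 0 \<le> 1 + \<epsilon> * h x y"
  shows "weight_fun (U \<times> V) (\<gamma> \<epsilon>)"
  unfolding weight_fun_def
proof (intro conjI allI impI)
  show "finite (U \<times> V)" using G.finite_U H.finite_U by simp
  fix x y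
  show "x \<notin> U \<times> V \<or> y \<notin> U \<times> V \<Longrightarrow> \<gamma> \<epsilon> x y = 0"
    using G.\<alpha>_outside H.\<alpha>_outside by (auto simp: \<gamma>_def mem_Times_iff)
  show "0 \<le> \<gamma> \<epsilon> x y"
  proof (cases "x \<in> U \<times> V \<and> y \<in> U \<times> V")
    case True
    then show ?thesis
      using nonneg G.\<alpha>_nonneg H.\<alpha>_nonneg
      by (cases x; cases y) (auto simp: \<gamma>_def intro!: mult_nonneg_nonneg)
  next
    case False
    then show ?thesis
      using G.\<alpha>_outside H.\<alpha>_outside by (auto simp: \<gamma>_def mem_Times_iff)
  qed
  show "\<gamma> \<epsilon> x y = \<gamma> \<epsilon> y x"
    by (simp add: \<gamma>_def h_def G.\<alpha>_sym[of "fst x"] H.\<alpha>_sym[of "snd x"] algebra_simps)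
next
  have "(\<Sum>x\<in>U \<times> V. \<Sum>y\<in>U \<times> V. \<gamma> \<epsilon> x y) = (\<Sum>u\<in>U. \<Sum>v\<in>V. degree_fun (U \<times> V) (\<gamma> \<epsilon>) (u, v))"
    by (simp add: degree_fun_def sum.cartesian_product')
  then show "(\<Sum>x\<in>U \<times> V. \<Sum>y\<in>U \<times> V. \<gamma> \<epsilon> x y) = 1"
    by (simp add: sum_V_degree_\<gamma> G.sum_p)
qed

lemma weight_joining_\<gamma>:
  assumes "\<forall>x\<in>U \<times> V. \<forall>y\<in>U \<times> V. 0 \<le> 1 + \<epsilon> * h x y"
  shows "weight_joining U \<alpha> V \<beta> (\<gamma> \<epsilon>)"
  unfolding weight_joining_def
  using weight_fun_\<gamma>[OF assms] sum_V_degree_\<gamma> sum_U_degree_\<gamma>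
  by (simp add: sum_V_\<gamma> sum_U_\<gamma> degree_\<gamma> mult_ac)

lemma not_weakly_disjoint:
  assumes \<kappa>: "\<kappa> \<noteq> 0" and u0: "u0 \<in> U" "f u0 \<noteq> 0" and v0: "v0 \<in> V" "g v0 \<noteq> 0"
  shows "\<not> weakly_disjoint U \<alpha> V \<beta>"
proof
  assume disjoint: "weakly_disjoint U \<alpha> V \<beta>"
  have "finite ((U \<times> V) \<times> (U \<times> V))" using G.finite_U H.finite_U by simp
  then obtain \<epsilon> where \<epsilon>: "0 < \<epsilon>" and "\<forall>z\<in>(U \<times> V) \<times> (U \<times> V). 0 \<le> 1 + \<epsilon> * case_prod h z"
    by (rule small_perturbation_nonneg)
  then have "weight_joining U \<alpha> V \<beta> (\<gamma> \<epsilon>)" by (intro weight_joining_\<gamma>) auto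
  with disjoint u0 v0 have "degree_fun (U \<times> V) (\<gamma> \<epsilon>) (u0, v0) = G.p u0 * H.p v0"
    by (simp add: weakly_disjoint_def)
  then have "G.p u0 * H.p v0 * (\<epsilon> * \<kappa> * f u0 * g v0) = 0"
    using u0 v0 by (simp add: degree_\<gamma> algebra_simps)
  with \<epsilon> \<kappa> u0 v0 G.p_pos[OF u0(1)] H.p_pos[OF v0(1)] show False by simp
qed

end

section \<open>Weak disjointness and the spectra of the transition matrices\<close>

context two_graphs
begin

lemma not_weakly_disjoint_if_common_eigenfun:
  assumes f: "eigenfun U \<alpha> lam f" "(\<Sum>u\<in>U. G.p u * f u) = 0" "u0 \<in> U" "f u0 \<noteq> 0"
    and g: "eigenfun V \<beta> lam g" "(\<Sum>v\<in>V. H.p v * g v) = 0" "v0 \<in> V" "g v0 \<noteq> 0"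
  shows "\<not> weakly_disjoint U \<alpha> V \<beta>"
  \<comment> \<open>\<open>t = lam\<close> makes the edge conditions vacuous but gives \<open>\<kappa> = 1 - lam\<^sup>2\<close>; for
    \<open>lam = \<plusminus>1\<close> take \<open>t = 0\<close> instead, using that then \<open>f u' = lam * f u\<close> along edges.\<close>
proof (cases "lam\<^sup>2 = 1")
  case True
  interpret common_eigenfun U \<alpha> V \<beta> lam 0 f g
    by unfold_locales (use f g True in \<open>simp_all add: G.eigenfun_edge H.eigenfun_edge\<close>)
  show ?thesis using True f g by (intro not_weakly_disjoint) simp_all
next
  case False
  interpret common_eigenfun U \<alpha> V \<beta> lam lam f g
    by unfold_locales (use f g in simp_all)
  show ?thesis using False f g by (intro not_weakly_disjoint) (simp_all add: power2_eq_square)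
qed

definition density :: "('a \<times> 'b \<Rightarrow> 'a \<times> 'b \<Rightarrow> real) \<Rightarrow> 'a \<Rightarrow> 'b \<Rightarrow> real" where
  "density \<gamma> u v = degree_fun (U \<times> V) \<gamma> (u, v) / (G.p u * H.p v)"

lemma density_intertwining:
  assumes \<gamma>: "weight_joining U \<alpha> V \<beta> \<gamma>" and u: "u \<in> U" and v: "v \<in> V"
  shows "(\<Sum>u'\<in>U. \<alpha> u u' * density \<gamma> u' v) / G.p u = (\<Sum>v'\<in>V. \<beta> v v' * density \<gamma> u v') / H.p v"
proof -
  have \<gamma>_sym: "\<gamma> x y = \<gamma> y x" for x y
    using \<gamma> unfolding weight_joining_def weight_fun_def by blast
  define T where "T = (\<Sum>u'\<in>U. \<Sum>v'\<in>V. \<gamma> (u', v) (u, v'))"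
  have "(\<Sum>u'\<in>U. \<alpha> u u' * density \<gamma> u' v) = (\<Sum>u'\<in>U. (\<Sum>v'\<in>V. \<gamma> (u', v) (u, v')) / H.p v)"
  proof (intro sum.cong refl)
    fix u' assume u': "u' \<in> U"
    have "G.p u' * (\<Sum>v'\<in>V. \<gamma> (u', v) (u, v')) = \<alpha> u' u * degree_fun (U \<times> V) \<gamma> (u', v)"
      using \<gamma> u u' v by (simp add: weight_joining_def)
    then show "\<alpha> u u' * density \<gamma> u' v = (\<Sum>v'\<in>V. \<gamma> (u', v) (u, v')) / H.p v"
      using G.p_pos[OF u'] H.p_pos[OF v] G.\<alpha>_sym[of u u']
      by (simp add: density_def field_simps)
  qed
  also have "\<dots> = T / H.p v" by (simp add: T_def sum_divide_distrib)
  finally have left: "(\<Sum>u'\<in>U. \<alpha> u u' * density \<gamma> u' v) = T / H.p v" .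
  have "(\<Sum>v'\<in>V. \<beta> v v' * density \<gamma> u v') = (\<Sum>v'\<in>V. (\<Sum>u'\<in>U. \<gamma> (u, v') (u', v)) / G.p u)"
  proof (intro sum.cong refl)
    fix v' assume v': "v' \<in> V"
    have "H.p v' * (\<Sum>u'\<in>U. \<gamma> (u, v') (u', v)) = \<beta> v' v * degree_fun (U \<times> V) \<gamma> (u, v')"
      using \<gamma> u v v' by (simp add: weight_joining_def)
    then show "\<beta> v v' * density \<gamma> u v' = (\<Sum>u'\<in>U. \<gamma> (u, v') (u', v)) / G.p u"
      using G.p_pos[OF u] H.p_pos[OF v'] H.\<alpha>_sym[of v v']
      by (simp add: density_def field_simps)
  qed
  also have "\<dots> = T / G.p u"
    by (simp add: T_def sum_divide_distrib[symmetric] \<gamma>_sym sum.swap[of _ V U])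
  finally have right: "(\<Sum>v'\<in>V. \<beta> v v' * density \<gamma> u v') = T / G.p u" .
  show ?thesis by (simp add: left right)
qed

lemma sum_p_density:
  assumes "weight_joining U \<alpha> V \<beta> \<gamma>" and "v \<in> V"
  shows "(\<Sum>u\<in>U. G.p u * density \<gamma> u v) = 1"
proof -
  have "(\<Sum>u\<in>U. G.p u * density \<gamma> u v) = (\<Sum>u\<in>U. degree_fun (U \<times> V) \<gamma> (u, v)) / H.p v"
    unfolding sum_divide_distrib using G.p_pos
    by (intro sum.cong refl) (simp add: density_def less_imp_neq[symmetric])
  then show ?thesis using assms H.p_pos[of v] by (simp add: weight_joining_def)
qed

lemma sum_q_density:
  assumes "weight_joining U \<alpha> V \<beta> \<gamma>" and "u \<in> U"
  shows "(\<Sum>v\<in>V. H.p v * density \<gamma> u v) = 1"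
proof -
  have "(\<Sum>v\<in>V. H.p v * density \<gamma> u v) = (\<Sum>v\<in>V. degree_fun (U \<times> V) \<gamma> (u, v)) / G.p u"
    unfolding sum_divide_distrib using H.p_pos
    by (intro sum.cong refl) (simp add: density_def less_imp_neq[symmetric])
  then show ?thesis using assms G.p_pos[of u] by (simp add: weight_joining_def)
qed

definition mat_of_fun :: "('a \<Rightarrow> 'b \<Rightarrow> real) \<Rightarrow> complex mat" where
  "mat_of_fun z = mat (length G.xs) (length H.xs) (\<lambda>(i, j). complex_of_real (z (G.xs ! i) (H.xs ! j)))"

lemma mat_of_fun_carrier: "mat_of_fun z \<in> carrier_mat (length G.xs) (length H.xs)"
  by (simp add: mat_of_fun_def)

lemma col_mat_of_fun: "j < length H.xs \<Longrightarrow> col (mat_of_fun z) j = G.vec_of_fun (\<lambda>u. z u (H.xs ! j))"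
  and row_mat_of_fun: "i < length G.xs \<Longrightarrow> row (mat_of_fun z) i = H.vec_of_fun (z (G.xs ! i))"
  by (auto intro!: eq_vecI simp: mat_of_fun_def G.vec_of_fun_def H.vec_of_fun_def)

lemma intertwining_mat_of_fun:
  assumes intertwining: "\<And>u v. u \<in> U \<Longrightarrow> v \<in> V \<Longrightarrow>
      (\<Sum>u'\<in>U. \<alpha> u u' * z u' v) / G.p u = (\<Sum>v'\<in>V. \<beta> v v' * z u v') / H.p v"
  shows "G.M * mat_of_fun z = mat_of_fun z * transpose_mat H.M"
proof (rule eq_matI)
  let ?Z = "mat_of_fun z"
  fix i j assume "i < dim_row (?Z * transpose_mat H.M)" "j < dim_col (?Z * transpose_mat H.M)"
  then have i: "i < length G.xs" and j: "j < length H.xs" by (simp_all add: mat_of_fun_def)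
  have "(G.M * ?Z) $$ (i, j) = (G.M *\<^sub>v G.vec_of_fun (\<lambda>u. z u (H.xs ! j))) $ i"
    using i j by (simp flip: col_mat_of_fun add: mat_of_fun_def)
  also have "\<dots> = (H.M *\<^sub>v H.vec_of_fun (z (G.xs ! i))) $ j"
    using i j intertwining[OF G.nth_xs_in_U[OF i] H.nth_xs_in_U[OF j]]
    by (simp add: G.M_mult_vec_of_fun H.M_mult_vec_of_fun
        del: of_real_divide of_real_sum of_real_mult)
  also have "\<dots> = (?Z * transpose_mat H.M) $$ (i, j)"
    using mult_vec_row_index[OF mat_of_fun_carrier H.M_carrier i j] i by (simp add: row_mat_of_fun)
  finally show "(G.M * ?Z) $$ (i, j) = (?Z * transpose_mat H.M) $$ (i, j)" .
qed (simp_all add: mat_of_fun_def)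

lemma eigenfun_1_if_intertwining:
  assumes intertwining: "\<And>u v. u \<in> U \<Longrightarrow> v \<in> V \<Longrightarrow>
      (\<Sum>u'\<in>U. \<alpha> u u' * z u' v) / G.p u = (\<Sum>v'\<in>V. \<beta> v v' * z u v') / H.p v"
    and common: "\<And>c. eigenvalue G.M c \<Longrightarrow> eigenvalue H.M c \<Longrightarrow> c = 1"
  shows "v \<in> V \<Longrightarrow> eigenfun U \<alpha> 1 (\<lambda>u. z u v)" and "u \<in> U \<Longrightarrow> eigenfun V \<beta> 1 (z u)"
proof -
  let ?Z = "mat_of_fun z"
  note fixed = G.intertwiner_fixed[OF H.M_carrier mat_of_fun_carrier
      intertwining_mat_of_fun[OF intertwining] common]
  assume v: "v \<in> V"
  let ?j = "H.pos v"
  have "G.M *\<^sub>v G.vec_of_fun (\<lambda>u. z u v) = G.M *\<^sub>v col ?Z ?j"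
    using col_mat_of_fun[OF H.pos_less[OF v]] H.nth_pos[OF v] by simp
  also have "\<dots> = col (G.M * ?Z) ?j"
    by (rule col_mult2[OF G.M_carrier mat_of_fun_carrier H.pos_less[OF v], symmetric])
  also have "\<dots> = G.vec_of_fun (\<lambda>u. z u v)"
    using col_mat_of_fun[OF H.pos_less[OF v]] H.nth_pos[OF v] by (simp only: fixed(1))
  finally show "eigenfun U \<alpha> 1 (\<lambda>u. z u v)" by (simp add: G.eigenfun_iff_mult_vec)
next
  let ?Z = "mat_of_fun z"
  note fixed = G.intertwiner_fixed[OF H.M_carrier mat_of_fun_carrier
      intertwining_mat_of_fun[OF intertwining] common]
  assume u: "u \<in> U"
  let ?i = "G.pos u"
  have "H.M *\<^sub>v row ?Z ?i = row ?Z ?i"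
  proof (rule eq_vecI)
    fix j assume "j < dim_vec (row ?Z ?i)"
    then have j: "j < length H.xs" by (simp add: mat_of_fun_def)
    have "(H.M *\<^sub>v row ?Z ?i) $ j = (?Z * transpose_mat H.M) $$ (?i, j)"
      by (rule mult_vec_row_index[OF mat_of_fun_carrier H.M_carrier G.pos_less[OF u] j])
    also have "\<dots> = row ?Z ?i $ j"
      using G.pos_less[OF u] j by (simp only: fixed(2)) (simp add: mat_of_fun_def)
    finally show "(H.M *\<^sub>v row ?Z ?i) $ j = row ?Z ?i $ j" .
  qed (simp add: mat_of_fun_def)
  then show "eigenfun V \<beta> 1 (z u)"
    using G.pos_less[OF u] by (simp add: H.eigenfun_iff_mult_vec row_mat_of_fun G.nth_pos[OF u])
qed

lemma weakly_disjoint_if_spectral_condition: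
  assumes common: "\<And>c. eigenvalue G.M c \<Longrightarrow> eigenvalue H.M c \<Longrightarrow> c = 1"
    and simple: "alg_mult G.M 1 = 1 \<or> alg_mult H.M 1 = 1"
  shows "weakly_disjoint U \<alpha> V \<beta>"
  unfolding weakly_disjoint_def
proof (intro allI impI ballI)
  fix \<gamma> u v assume \<gamma>: "weight_joining U \<alpha> V \<beta> \<gamma>" and u: "u \<in> U" and v: "v \<in> V"
  have harmonic_U: "eigenfun U \<alpha> 1 (\<lambda>u. density \<gamma> u v)"
    and harmonic_V: "eigenfun V \<beta> 1 (density \<gamma> u)"
    using density_intertwining[OF \<gamma>] common u v by (blast intro: eigenfun_1_if_intertwining)+
  from simple have "density \<gamma> u v = 1"
  proof
    assume "alg_mult G.M 1 = 1"
    then show ?thesis by (rule G.eigenfun_1_eq_1[OF _ harmonic_U sum_p_density[OF \<gamma> v] u])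
  next
    assume "alg_mult H.M 1 = 1"
    then show ?thesis by (rule H.eigenfun_1_eq_1[OF _ harmonic_V sum_q_density[OF \<gamma> u] v])
  qed
  then show "degree_fun (U \<times> V) \<gamma> (u, v) = G.p u * H.p v"
    using G.p_pos[OF u] H.p_pos[OF v] by (simp add: density_def)
qed

lemma common_eigenvalue_if_weakly_disjoint:
  assumes disjoint: "weakly_disjoint U \<alpha> V \<beta>"
    and c: "eigenvalue G.M c" "eigenvalue H.M c"
  shows "c = 1"
proof (rule ccontr)
  assume "c \<noteq> 1"
  obtain f u0 where "Im c = 0" and f: "eigenfun U \<alpha> (Re c) f" "u0 \<in> U" "f u0 \<noteq> 0"
    using G.eigenfun_of_eigenvalue[OF c(1)] by blast
  obtain g v0 where g: "eigenfun V \<beta> (Re c) g" "v0 \<in> V" "g v0 \<noteq> 0"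
    using H.eigenfun_of_eigenvalue[OF c(2)] by blast
  from \<open>c \<noteq> 1\<close> \<open>Im c = 0\<close> have "Re c \<noteq> 1" by (simp add: complex_eq_iff)
  with f g have "\<not> weakly_disjoint U \<alpha> V \<beta>"
    by (intro not_weakly_disjoint_if_common_eigenfun[of "Re c" f u0 g v0])
      (simp_all add: G.eigenfun_orthogonal_p H.eigenfun_orthogonal_p)
  with disjoint show False by contradiction
qed

lemma simple_eigenvalue_1_if_weakly_disjoint:
  assumes disjoint: "weakly_disjoint U \<alpha> V \<beta>"
  shows "alg_mult G.M 1 = 1 \<or> alg_mult H.M 1 = 1"
proof -
  have "\<not> (2 \<le> alg_mult G.M 1 \<and> 2 \<le> alg_mult H.M 1)"
  proof
    assume "2 \<le> alg_mult G.M 1 \<and> 2 \<le> alg_mult H.M 1"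
    then obtain f g where f: "eigenfun U \<alpha> 1 f" "\<exists>u\<in>U. \<exists>u'\<in>U. f u \<noteq> f u'"
      and g: "eigenfun V \<beta> 1 g" "\<exists>v\<in>V. \<exists>v'\<in>V. g v \<noteq> g v'"
      using G.nonconstant_eigenfun_1 H.nonconstant_eigenfun_1 by blast
    obtain f' u0 where "eigenfun U \<alpha> 1 f'" "(\<Sum>u\<in>U. G.p u * f' u) = 0" "u0 \<in> U" "f' u0 \<noteq> 0"
      using f G.centered_eigenfun_1 by blast
    moreover obtain g' v0 where "eigenfun V \<beta> 1 g'" "(\<Sum>v\<in>V. H.p v * g' v) = 0" "v0 \<in> V" "g' v0 \<noteq> 0"
      using g H.centered_eigenfun_1 by blast
    ultimately have "\<not> weakly_disjoint U \<alpha> V \<beta>"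
      by (rule not_weakly_disjoint_if_common_eigenfun)
    with disjoint show False by contradiction
  qed
  moreover have "0 < alg_mult G.M 1" and "0 < alg_mult H.M 1"
    using G.eigenvalue_1 H.eigenvalue_1
    by (simp_all add: eigenvalue_iff_alg_mult_pos[OF G.M_carrier] eigenvalue_iff_alg_mult_pos[OF H.M_carrier])
  ultimately show ?thesis by linarith
qed

lemma share_eigenvalue_1_iff:
  "share_eigenvalue_overlap G.M H.M 1 1 \<longleftrightarrow> alg_mult G.M 1 = 1 \<or> alg_mult H.M 1 = 1"
  using G.eigenvalue_1 H.eigenvalue_1
  by (auto simp: share_eigenvalue_overlap_def min_def eigenvalue_iff_alg_mult_pos[OF G.M_carrier]
      eigenvalue_iff_alg_mult_pos[OF H.M_carrier])

end

theorem proposition5p3: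
  fixes U :: "'a set" and \<alpha> :: "'a \<Rightarrow> 'a \<Rightarrow> real"
    and V :: "'b set" and \<beta> :: "'b \<Rightarrow> 'b \<Rightarrow> real"
  assumes "fully_supported U \<alpha>" and "fully_supported V \<beta>"
  shows "weakly_disjoint U \<alpha> V \<beta> \<longleftrightarrow>
    ((\<forall>c. eigenvalue (transition_mat U \<alpha>) c \<and> eigenvalue (transition_mat V \<beta>) c \<longrightarrow> c = 1)
     \<and> share_eigenvalue_overlap (transition_mat U \<alpha>) (transition_mat V \<beta>) 1 1)"
proof -
  interpret two_graphs U \<alpha> V \<beta>
    using assms by (simp add: two_graphs_def fully_supported_graph_def)
  show ?thesis
    unfolding G.transition_mat_eq H.transition_mat_eq share_eigenvalue_1_iff
    using weakly_disjoint_if_spectral_condition common_eigenvalue_if_weakly_disjoint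
      simple_eigenvalue_1_if_weakly_disjoint by blast
qed

end
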